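(* Let $d,m\ge1$, let $g:[-1,1]\to[-\infty,\infty)$ be arbitrary, and let $A=\{t_1,\dots,t_{m+1}\}$ with $-1\le t_1<\dots<t_{m+1}\le 1$. Let $q$ be a real polynomial with $q(t_i)=g(t_i)$ for $i=1,\dots,m+1$ and $q(t)\ge g(t)$ for all $t\in[-1,1]$. Let $\omega_N=\{\mathbf{x}_1,\dots,\mathbf{x}_N\}\subset S^d$ be a spherical $L$-design with $L\ge\deg q$, and let $\mathbf{y}\in S^d$ satisfy $D(\mathbf{y},\omega_N)\subset A$. Then the function $p^g(\mathbf{x},\omega_N):=\sum_{i=1}^N g(\mathbf{x}\cdot\mathbf{x}_i)$, $\mathbf{x}\in S^d$, attains its absolute maximum over $S^d$ at $\mathbf{y}$. If moreover $q(t)>g(t)$ for every $t\in[-1,1]\setminus A$, then no point $\mathbf{z}\in S^d$ with $D(\mathbf{z},\omega_N)\not\subset A$ is a point of absolute maximum of $p^g(\cdot,\omega_N)$ on $S^d$.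
   Context: $S^d$ is the unit sphere in $\mathbb{R}^{d+1}$ and $\sigma_d$ its normalized surface measure. $\omega_N$ is a spherical $L$-design if $\frac1N\sum_{i=1}^N p(\mathbf{x}_i)=\int_{S^d}p\,d\sigma_d$ for every polynomial $p$ on $\mathbb{R}^{d+1}$ of degree at most $L$. For $\mathbf{z}\in S^d$, $D(\mathbf{z},\omega_N)=\{\mathbf{z}\cdot\mathbf{x}_i:i=1,\dots,N\}$. *)

theory Defs
  imports "HOL-Analysis.Analysis" "HOL-Computational_Algebra.Polynomial"
begin

text \<open>The unit sphere S^d in R^(d+1) is \<open>sphere 0 1 :: (real^'n) set\<close> with CARD('n) = d+1.\<close>

text \<open>Normalized surface measure sigma_d on the sphere, defined by the cone construction:
  the push-forward of the normalized Lebesgue measure on the open unit ball under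
  radial projection x \<mapsto> x / |x|.\<close>
definition sphere_measure :: "(real^'n) measure" where
  "sphere_measure = distr (uniform_measure lborel (ball 0 1)) borel (\<lambda>x. x /\<^sub>R norm x)"

definition poly_fun_deg :: "nat \<Rightarrow> (real^'n \<Rightarrow> real) \<Rightarrow> bool" where
  "poly_fun_deg L p \<longleftrightarrow>
     (\<exists>(F :: ('n \<Rightarrow> nat) set) (c :: ('n \<Rightarrow> nat) \<Rightarrow> real).
        finite F \<and> (\<forall>\<alpha>\<in>F. (\<Sum>i\<in>UNIV. \<alpha> i) \<le> L) \<and>
        p = (\<lambda>x. \<Sum>\<alpha>\<in>F. c \<alpha> * (\<Prod>i\<in>UNIV. (x $ i) ^ \<alpha> i)))"

text \<open>The configuration omega_N = (X 0, ..., X (N-1)) (with multiplicity) is a spherical L-design.\<close>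
definition spherical_design :: "nat \<Rightarrow> nat \<Rightarrow> (nat \<Rightarrow> real^'n) \<Rightarrow> bool" where
  "spherical_design L N X \<longleftrightarrow>
     (\<forall>i<N. X i \<in> sphere 0 1) \<and>
     (\<forall>p. poly_fun_deg L p \<longrightarrow>
        (1 / real N) * (\<Sum>i<N. p (X i)) = (\<integral>x. p x \<partial>sphere_measure))"

definition Dset :: "real^'n \<Rightarrow> nat \<Rightarrow> (nat \<Rightarrow> real^'n) \<Rightarrow> real set" where
  "Dset z N X = (\<lambda>i. z \<bullet> X i) ` {..<N}"

definition pg :: "(real \<Rightarrow> ereal) \<Rightarrow> nat \<Rightarrow> (nat \<Rightarrow> real^'n) \<Rightarrow> real^'n \<Rightarrow> ereal" where
  "pg g N X x = (\<Sum>i<N. g (x \<bullet> X i))"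

end

theory Submission
  imports Defs
begin

text \<open>Since \<open>q \<ge> g\<close> on \<open>[-1, 1]\<close> and every \<open>x \<bullet> x\<^sub>i\<close> lies in \<open>[-1, 1]\<close>, we have
  \<open>p\<^sup>g(x) \<le> Q(x) := \<Sum>\<^sub>i q(x \<bullet> x\<^sub>i)\<close>, with equality when all \<open>x \<bullet> x\<^sub>i\<close> are nodes and
  strict inequality when one of them is not a node and \<open>q > g\<close> off the nodes. Because
  \<open>deg q \<le> L\<close>, the design property gives \<open>Q(x) = N \<integral> q(u \<bullet> x) d\<sigma>(u)\<close>, which does not
  depend on \<open>x\<close> because \<open>\<sigma>\<close> is invariant under orthogonal maps. Hence \<open>Q\<close> is a constant
  bound for \<open>p\<^sup>g\<close> that is attained at \<open>y\<close>.\<close>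

lemma borel_measurable_linear:
  fixes f :: "'a::euclidean_space \<Rightarrow> 'b::real_normed_vector"
  shows "linear f \<Longrightarrow> f \<in> borel_measurable borel"
  by (simp add: borel_measurable_continuous_onI linear_continuous_on linear_linear)

lemma lborel_distr_orthogonal_wellorder:
  fixes f :: "real^'k::{finite,wellorder} \<Rightarrow> real^'k::_"
  assumes f: "orthogonal_transformation f"
  shows "distr lborel borel f = lborel"
proof (rule lborel_eqI[symmetric])
  have f_meas: "f \<in> borel_measurable lborel"
    using f by (simp add: borel_measurable_linear orthogonal_transformation_linear)
  have g: "orthogonal_transformation (inv f)"
    using f by (rule orthogonal_transformation_inv)
  fix l u :: "real^'k::_"
  assume lu: "\<And>b. b \<in> Basis \<Longrightarrow> l \<bullet> b \<le> u \<bullet> b"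
  have pre: "f -` box l u = inv f ` box l u"
    using orthogonal_transformation_bij[OF f] by (simp add: bij_vimage_eq_inv_image)
  have "emeasure (distr lborel borel f) (box l u) = emeasure lborel (f -` box l u)"
    using f_meas by (simp add: emeasure_distr)
  also have "\<dots> = emeasure lebesgue (inv f ` box l u)"
    using f_meas by (simp add: pre[symmetric] measurable_sets_borel)
  also have "\<dots> = measure lebesgue (inv f ` box l u)"
    by (simp add: g measurable_orthogonal_image emeasure_eq_measure2)
  also have "\<dots> = measure lebesgue (box l u)"
    by (simp add: g measure_orthogonal_image)
  also have "\<dots> = emeasure lborel (box l u)"
    by (simp add: emeasure_eq_measure2)
  also have "\<dots> = (\<Prod>b\<in>Basis. (u - l) \<bullet> b)"
    using lu by (simp add: emeasure_lborel_box_eq)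
  finally show "emeasure (distr lborel borel f) (box l u) = (\<Prod>b\<in>Basis. (u - l) \<bullet> b)" .
qed simp

lemma prod_Basis_vec: "(\<Prod>b\<in>Basis. (v::real^'n) \<bullet> b) = (\<Prod>i\<in>UNIV. v $ i)"
  by (simp add: Basis_vec_def cart_eq_inner_axis axis_eq_axis prod.UNION_disjoint)

lemma linear_vec_reindex: "linear (\<lambda>x::'a::real_vector^'n. \<chi> j. x $ \<sigma> j)"
  by (rule linearI) (simp_all add: vec_eq_iff)

lemma orthogonal_transformation_vec_reindex:
  fixes \<sigma> :: "'k::finite \<Rightarrow> 'n::finite"
  assumes "bij \<sigma>"
  shows "orthogonal_transformation (\<lambda>x::real^'n. \<chi> j. x $ \<sigma> j)"
  unfolding orthogonal_transformation_def
proof (intro conjI allI linear_vec_reindex)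
  fix v w :: "real^'n"
  show "(\<chi> j. v $ \<sigma> j) \<bullet> (\<chi> j. w $ \<sigma> j) = v \<bullet> w"
    using sum.reindex_bij_betw[OF assms[unfolded bij_betw_def[symmetric]], of "\<lambda>i. v $ i * w $ i"]
    by (simp add: inner_vec_def)
qed

lemma lborel_distr_vec_reindex:
  fixes \<sigma> :: "'k::finite \<Rightarrow> 'n::finite"
  assumes \<sigma>: "bij \<sigma>"
  shows "distr lborel borel (\<lambda>x::real^'n. \<chi> j. x $ \<sigma> j) = lborel"
proof (rule lborel_eqI[symmetric])
  let ?l = "\<lambda>v::real^'k. \<chi> i. v $ inv \<sigma> i"
  have meas: "(\<lambda>x::real^'n. \<chi> j. x $ \<sigma> j) \<in> borel_measurable lborel"
    using borel_measurable_linear[OF linear_vec_reindex] by simp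
  fix l u :: "real^'k"
  assume lu_Basis: "\<And>b. b \<in> Basis \<Longrightarrow> l \<bullet> b \<le> u \<bullet> b"
  have lu: "l $ j \<le> u $ j" for j
    using lu_Basis[of "axis j 1"] by (simp add: cart_eq_inner_axis)
  have pre: "(\<lambda>x::real^'n. \<chi> j. x $ \<sigma> j) -` box l u = box (?l l) (?l u)"
    using \<sigma> by (auto simp: mem_box_cart bij_inv_eq_iff) (metis bij_inv_eq_iff)+
  have "emeasure (distr lborel borel (\<lambda>x::real^'n. \<chi> j. x $ \<sigma> j)) (box l u)
      = emeasure lborel (box (?l l) (?l u))"
    using meas by (simp add: emeasure_distr pre)
  also have "\<dots> = (\<Prod>b\<in>Basis. (?l u - ?l l) \<bullet> b)"
    using lu by (simp add: emeasure_lborel_box_eq Basis_vec_def inner_axis)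
  also have "\<dots> = (\<Prod>i\<in>UNIV. u $ inv \<sigma> i - l $ inv \<sigma> i)"
    by (simp add: prod_Basis_vec)
  also have "\<dots> = (\<Prod>j\<in>UNIV. u $ j - l $ j)"
    using prod.reindex_bij_betw[OF bij_imp_bij_inv[OF \<sigma>, unfolded bij_betw_def[symmetric]], of "\<lambda>j. u $ j - l $ j"]
    by simp
  also have "\<dots> = (\<Prod>b\<in>Basis. (u - l) \<bullet> b)"
    by (simp add: prod_Basis_vec)
  finally show "emeasure (distr lborel borel (\<lambda>x::real^'n. \<chi> j. x $ \<sigma> j)) (box l u) = (\<Prod>b\<in>Basis. (u - l) \<bullet> b)" .
qed simp

text \<open>The library proves invariance of Lebesgue measure under orthogonal maps only for
  well-ordered index types; it is transferred to an arbitrary finite index type \<open>'n\<close>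
  through a well-ordered copy of \<open>'n\<close>.\<close>

typedef 'a ordered_copy = "UNIV :: 'a set" by simp

instantiation ordered_copy :: (finite) linorder
begin
definition less_eq_ordered_copy_def:
  "x \<le> y \<longleftrightarrow> to_nat (Rep_ordered_copy x) \<le> to_nat (Rep_ordered_copy y)"
definition less_ordered_copy_def:
  "x < y \<longleftrightarrow> to_nat (Rep_ordered_copy x) < to_nat (Rep_ordered_copy y)"
instance
  by standard (auto simp: less_eq_ordered_copy_def less_ordered_copy_def Rep_ordered_copy_inject)
end

instance ordered_copy :: (finite) finite
proof
  have "UNIV = Abs_ordered_copy ` (UNIV :: 'a set)"
    by (metis Rep_ordered_copy_inverse surj_def)
  then show "finite (UNIV :: 'a ordered_copy set)"
    by (metis finite_imageI finite)
qed

instance ordered_copy :: (finite) wellorder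
proof -
  have "{(x :: 'a ordered_copy, y). x < y} = inv_image less_than (to_nat \<circ> Rep_ordered_copy)"
    by (auto simp: less_ordered_copy_def)
  then have "wf {(x :: 'a ordered_copy, y). x < y}"
    by simp
  then show "OFCLASS('a ordered_copy, wellorder_class)"
    by (rule wf_wellorderI) intro_classes
qed

lemma lborel_distr_orthogonal:
  fixes f :: "real^'n \<Rightarrow> real^'n"
  assumes f: "orthogonal_transformation f"
  shows "distr lborel borel f = lborel"
proof -
  let ?to = "\<lambda>x::real^'n. \<chi> j::'n ordered_copy. x $ Rep_ordered_copy j"
  let ?from = "\<lambda>y::real^'n ordered_copy. \<chi> i. y $ Abs_ordered_copy i"
  have bij_Rep: "bij Rep_ordered_copy" and bij_Abs: "bij Abs_ordered_copy"
    by (metis Abs_ordered_copy_inverse Rep_ordered_copy_inverse UNIV_I bij_betw_byWitness subsetI)+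
  have from_to: "?from (?to x) = x" for x
    by (simp add: vec_eq_iff Abs_ordered_copy_inverse)
  have orth: "orthogonal_transformation (?to \<circ> f \<circ> ?from)"
    using f orthogonal_transformation_vec_reindex[OF bij_Rep] orthogonal_transformation_vec_reindex[OF bij_Abs]
    by (intro orthogonal_transformation_compose)
  have meas_f: "f \<in> borel \<rightarrow>\<^sub>M borel" and meas_from: "?from \<in> borel \<rightarrow>\<^sub>M borel"
      and meas_orth: "?to \<circ> f \<circ> ?from \<in> borel \<rightarrow>\<^sub>M borel"
    using f orth by (simp_all add: borel_measurable_linear orthogonal_transformation_linear linear_vec_reindex)
  have "distr lborel borel f = distr (distr lborel borel ?from) borel f"
    by (simp add: lborel_distr_vec_reindex[OF bij_Abs])
  also have "\<dots> = distr lborel borel (?from \<circ> (?to \<circ> f \<circ> ?from))"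
    using meas_f meas_from by (simp add: distr_distr comp_def from_to Abs_ordered_copy_inverse)
  also have "\<dots> = distr (distr lborel borel (?to \<circ> f \<circ> ?from)) borel ?from"
    using meas_orth meas_from by (simp add: distr_distr)
  also have "\<dots> = lborel"
    by (simp add: lborel_distr_orthogonal_wellorder[OF orth] lborel_distr_vec_reindex[OF bij_Abs])
  finally show ?thesis .
qed

lemma distr_uniform_measure_invariant:
  assumes f: "f \<in> M \<rightarrow>\<^sub>M N" and sets_N: "sets N = sets M" and inv: "distr M N f = M"
    and A: "A \<in> sets M" and A_inv: "f -` A \<inter> space M = A"
  shows "distr (uniform_measure M A) N f = uniform_measure M A"
proof (rule measure_eqI)
  show "sets (distr (uniform_measure M A) N f) = sets (uniform_measure M A)"
    by (simp add: sets_N)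
  fix B assume "B \<in> sets (distr (uniform_measure M A) N f)"
  then have B: "B \<in> sets N" by simp
  have f_U: "f \<in> uniform_measure M A \<rightarrow>\<^sub>M N"
    using f by (simp add: measurable_cong_sets[OF sets_uniform_measure refl])
  have AB: "A \<inter> B \<in> sets N"
    using A B sets_N by auto
  have "emeasure (distr (uniform_measure M A) N f) B = emeasure M (A \<inter> (f -` B \<inter> space M)) / emeasure M A"
    using f_U A B measurable_sets[OF f B] by (simp add: emeasure_distr emeasure_uniform_measure)
  also have "A \<inter> (f -` B \<inter> space M) = f -` (A \<inter> B) \<inter> space M"
    using A_inv by auto
  also have "emeasure M \<dots> = emeasure (distr M N f) (A \<inter> B)"
    using f AB by (simp add: emeasure_distr)
  also have "emeasure (distr M N f) (A \<inter> B) / emeasure M A = emeasure (uniform_measure M A) B"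
    using A B sets_N by (simp add: inv emeasure_uniform_measure Int_commute)
  finally show "emeasure (distr (uniform_measure M A) N f) B = emeasure (uniform_measure M A) B" .
qed

lemma sphere_measure_distr_orthogonal:
  fixes f :: "real^'n \<Rightarrow> real^'n"
  assumes f: "orthogonal_transformation f"
  shows "distr sphere_measure borel f = sphere_measure"
proof -
  let ?U = "uniform_measure lborel (ball (0::real^'n) 1)"
  let ?normalize = "\<lambda>x::real^'n. x /\<^sub>R norm x"
  have meas_f: "f \<in> M \<rightarrow>\<^sub>M borel" if "sets M = sets borel" for M :: "(real^'n) measure"
    using f by (simp add: measurable_cong_sets[OF that refl] borel_measurable_linear orthogonal_transformation_linear)
  have meas_normalize: "?normalize \<in> M \<rightarrow>\<^sub>M borel" if "sets M = sets borel" for M :: "(real^'n) measure"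
    by (simp add: measurable_cong_sets[OF that refl])
  have ball_inv: "f -` ball 0 1 = ball 0 1"
    using f by (auto simp: orthogonal_transformation_norm)
  have U_inv: "distr ?U borel f = ?U"
    using f by (intro distr_uniform_measure_invariant) (simp_all add: meas_f lborel_distr_orthogonal ball_inv)
  have "f \<circ> ?normalize = ?normalize \<circ> f"
    using f by (auto simp: orthogonal_transformation_norm orthogonal_transformation_scaleR)
  then have "distr sphere_measure borel f = distr (distr ?U borel f) borel ?normalize"
    unfolding sphere_measure_def by (simp add: distr_distr meas_f meas_normalize)
  also have "\<dots> = sphere_measure"
    by (simp add: U_inv sphere_measure_def)
  finally show ?thesis .
qed

lemma integral_sphere_measure_orthogonal:
  fixes f :: "real^'n \<Rightarrow> real^'n" and h :: "real^'n \<Rightarrow> real"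
  assumes f: "orthogonal_transformation f" and h: "h \<in> borel_measurable borel"
  shows "(\<integral>u. h (f u) \<partial>sphere_measure) = (\<integral>u. h u \<partial>sphere_measure)"
proof -
  have "f \<in> sphere_measure \<rightarrow>\<^sub>M borel"
    using f by (simp add: sphere_measure_def measurable_cong_sets[OF sets_distr refl]
        borel_measurable_linear orthogonal_transformation_linear)
  then show ?thesis
    using h by (simp add: integral_distr[symmetric] sphere_measure_distr_orthogonal f)
qed

lemma integral_sphere_measure_zonal:
  fixes x y :: "real^'n" and h :: "real \<Rightarrow> real"
  assumes h: "h \<in> borel_measurable borel" and x: "norm x = 1" and y: "norm y = 1"
  shows "(\<integral>u. h (u \<bullet> x) \<partial>sphere_measure) = (\<integral>u. h (u \<bullet> y) \<partial>sphere_measure)"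
proof -
  obtain f where f: "orthogonal_transformation f" and fy: "f y = x"
    using orthogonal_transformation_exists_1[OF y x] by blast
  have "u \<bullet> x = inv f u \<bullet> y" for u
    using f fy orthogonal_transformation_surj[OF f]
    by (metis orthogonal_transformation_def surj_f_inv_f)
  then have "(\<integral>u. h (u \<bullet> x) \<partial>sphere_measure) = (\<integral>u. h (inv f u \<bullet> y) \<partial>sphere_measure)"
    by simp
  also have "\<dots> = (\<integral>u. h (u \<bullet> y) \<partial>sphere_measure)"
    using h by (intro integral_sphere_measure_orthogonal orthogonal_transformation_inv f) simp
  finally show ?thesis .
qed

definition vec_monomial :: "('n \<Rightarrow> nat) \<Rightarrow> real^'n \<Rightarrow> real" where
  "vec_monomial \<alpha> x = (\<Prod>i\<in>UNIV. (x $ i) ^ \<alpha> i)"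

lemma poly_fun_deg_iff:
  "poly_fun_deg L p \<longleftrightarrow>
     (\<exists>F c. finite F \<and> (\<forall>\<alpha>\<in>F. (\<Sum>i\<in>UNIV. \<alpha> i) \<le> L) \<and> p = (\<lambda>x. \<Sum>\<alpha>\<in>F. c \<alpha> * vec_monomial \<alpha> x))"
  unfolding poly_fun_deg_def vec_monomial_def ..

lemma poly_fun_deg_sum_monomials:
  fixes J :: "'j set" and \<alpha> :: "'j \<Rightarrow> 'n::finite \<Rightarrow> nat" and c :: "'j \<Rightarrow> real"
  assumes J: "finite J" and deg: "\<forall>j\<in>J. (\<Sum>i\<in>UNIV. \<alpha> j i) \<le> L"
  shows "poly_fun_deg L (\<lambda>x::real^'n. \<Sum>j\<in>J. c j * vec_monomial (\<alpha> j) x)"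
  unfolding poly_fun_deg_iff
proof (intro exI conjI)
  show "finite (\<alpha> ` J)" "\<forall>\<beta>\<in>\<alpha> ` J. (\<Sum>i\<in>UNIV. \<beta> i) \<le> L"
    using J deg by auto
  have "(\<Sum>j\<in>J. c j * vec_monomial (\<alpha> j) x) = (\<Sum>\<beta>\<in>\<alpha> ` J. (\<Sum>j\<in>{j\<in>J. \<alpha> j = \<beta>}. c j) * vec_monomial \<beta> x)"
    for x :: "real^'n"
    by (subst sum.image_gen[OF J]) (auto intro!: sum.cong simp: sum_distrib_right)
  then show "(\<lambda>x. \<Sum>j\<in>J. c j * vec_monomial (\<alpha> j) x) =
        (\<lambda>x. \<Sum>\<beta>\<in>\<alpha> ` J. (\<Sum>j\<in>{j\<in>J. \<alpha> j = \<beta>}. c j) * vec_monomial \<beta> x)"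
    by simp
qed

lemma poly_fun_deg_mono: "poly_fun_deg k p \<Longrightarrow> k \<le> L \<Longrightarrow> poly_fun_deg L p"
  unfolding poly_fun_deg_def by (blast intro: order_trans)

lemma poly_fun_deg_const: "poly_fun_deg 0 (\<lambda>x::real^'n. c)"
  using poly_fun_deg_sum_monomials[of "{()}" "\<lambda>_ _. 0" 0 "\<lambda>_. c"]
  by (simp add: vec_monomial_def)

lemma poly_fun_deg_add:
  assumes "poly_fun_deg L (p :: real^'n \<Rightarrow> real)" "poly_fun_deg L r"
  shows "poly_fun_deg L (\<lambda>x. p x + r x)"
proof -
  obtain F1 c1 F2 c2 where 1: "finite F1" "\<forall>\<alpha>\<in>F1. (\<Sum>i\<in>UNIV. \<alpha> i) \<le> L" "p = (\<lambda>x. \<Sum>\<alpha>\<in>F1. c1 \<alpha> * vec_monomial \<alpha> x)"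
    and 2: "finite F2" "\<forall>\<alpha>\<in>F2. (\<Sum>i\<in>UNIV. \<alpha> i) \<le> L" "r = (\<lambda>x. \<Sum>\<alpha>\<in>F2. c2 \<alpha> * vec_monomial \<alpha> x)"
    using assms unfolding poly_fun_deg_iff by blast
  have "poly_fun_deg L (\<lambda>x. \<Sum>j\<in>F1 <+> F2. case_sum c1 c2 j * vec_monomial (case_sum id id j) x)"
    using 1 2 by (intro poly_fun_deg_sum_monomials) auto
  then show ?thesis
    using 1 2 by (simp add: sum.Plus)
qed

lemma poly_fun_deg_mult:
  assumes "poly_fun_deg k1 (p :: real^'n \<Rightarrow> real)" "poly_fun_deg k2 r"
  shows "poly_fun_deg (k1 + k2) (\<lambda>x. p x * r x)"
proof -
  obtain F1 c1 F2 c2 where 1: "finite F1" "\<forall>\<alpha>\<in>F1. (\<Sum>i\<in>UNIV. \<alpha> i) \<le> k1" "p = (\<lambda>x. \<Sum>\<alpha>\<in>F1. c1 \<alpha> * vec_monomial \<alpha> x)"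
    and 2: "finite F2" "\<forall>\<alpha>\<in>F2. (\<Sum>i\<in>UNIV. \<alpha> i) \<le> k2" "r = (\<lambda>x. \<Sum>\<alpha>\<in>F2. c2 \<alpha> * vec_monomial \<alpha> x)"
    using assms unfolding poly_fun_deg_iff by blast
  have "p x * r x = (\<Sum>(\<alpha>, \<beta>)\<in>F1 \<times> F2. (c1 \<alpha> * c2 \<beta>) * vec_monomial (\<lambda>i. \<alpha> i + \<beta> i) x)" for x
    using 1 2 by (simp add: sum_product sum.cartesian_product vec_monomial_def power_add prod.distrib mult_ac)
  moreover have "poly_fun_deg (k1 + k2) (\<lambda>x. \<Sum>(\<alpha>, \<beta>)\<in>F1 \<times> F2. (c1 \<alpha> * c2 \<beta>) * vec_monomial (\<lambda>i. \<alpha> i + \<beta> i) x)"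
    using 1 2 poly_fun_deg_sum_monomials[of "F1 \<times> F2" "\<lambda>(\<alpha>, \<beta>) i. \<alpha> i + \<beta> i" "k1 + k2" "\<lambda>(\<alpha>, \<beta>). c1 \<alpha> * c2 \<beta>"]
    by (auto simp: sum.distrib case_prod_beta' intro: add_mono)
  ultimately show ?thesis
    by simp
qed

lemma poly_fun_deg_sum:
  assumes "finite S" "\<forall>s\<in>S. poly_fun_deg L (f s :: real^'n \<Rightarrow> real)"
  shows "poly_fun_deg L (\<lambda>x. \<Sum>s\<in>S. f s x)"
  using assms
proof (induction S rule: finite_induct)
  case empty
  then show ?case using poly_fun_deg_mono[OF poly_fun_deg_const[of 0]] by simp
next
  case (insert s S)
  then show ?case using poly_fun_deg_add[of L "f s" "\<lambda>x. \<Sum>s\<in>S. f s x"] by simp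
qed

lemma poly_fun_deg_inner: "poly_fun_deg 1 (\<lambda>x::real^'n. x \<bullet> a)"
proof -
  have "vec_monomial (\<lambda>i. if i = k then 1 else 0) x = x $ k" for k and x :: "real^'n"
    by (simp add: vec_monomial_def if_distrib[of "\<lambda>e. x $ _ ^ e"] prod.If_cases)
  then have "x \<bullet> a = (\<Sum>k\<in>UNIV. a $ k * vec_monomial (\<lambda>i. if i = k then 1 else 0) x)" for x :: "real^'n"
    by (simp add: inner_vec_def mult.commute)
  moreover have "poly_fun_deg 1 (\<lambda>x::real^'n. \<Sum>k\<in>UNIV. a $ k * vec_monomial (\<lambda>i. if i = k then 1 else 0) x)"
    by (intro poly_fun_deg_sum_monomials) auto
  ultimately show ?thesis
    by simp
qed

lemma poly_fun_deg_inner_power: "poly_fun_deg k (\<lambda>x::real^'n. (x \<bullet> a) ^ k)"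
proof (induction k)
  case 0
  then show ?case using poly_fun_deg_const[of 1] by simp
next
  case (Suc k)
  then show ?case using poly_fun_deg_mult[OF poly_fun_deg_inner Suc] by simp
qed

lemma poly_fun_deg_poly_inner:
  assumes "degree q \<le> L"
  shows "poly_fun_deg L (\<lambda>x::real^'n. poly q (x \<bullet> a))"
proof -
  have "poly_fun_deg L (\<lambda>x::real^'n. coeff q k * (x \<bullet> a) ^ k)" if "k \<le> degree q" for k
    using poly_fun_deg_mono[OF poly_fun_deg_mult[OF poly_fun_deg_const poly_fun_deg_inner_power], of k L]
      that assms by simp
  then have "poly_fun_deg L (\<lambda>x::real^'n. \<Sum>k\<le>degree q. coeff q k * (x \<bullet> a) ^ k)"
    by (intro poly_fun_deg_sum) auto
  then show ?thesis
    by (simp add: poly_altdef)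
qed

lemma spherical_design_sum_poly_inner_eq:
  fixes X :: "nat \<Rightarrow> real^'n" and q :: "real poly"
  assumes design: "spherical_design L N X" and deg: "degree q \<le> L"
    and x: "norm x = 1" and y: "norm y = 1"
  shows "(\<Sum>i<N. poly q (x \<bullet> X i)) = (\<Sum>i<N. poly q (y \<bullet> X i))"
proof (cases "N = 0")
  case False
  have "(1 / real N) * (\<Sum>i<N. poly q (X i \<bullet> v)) = (\<integral>u. poly q (u \<bullet> v) \<partial>sphere_measure)" for v :: "real^'n"
    using design poly_fun_deg_poly_inner[OF deg, of v] unfolding spherical_design_def by blast
  then have "(1 / real N) * (\<Sum>i<N. poly q (X i \<bullet> x)) = (1 / real N) * (\<Sum>i<N. poly q (X i \<bullet> y))"
    using integral_sphere_measure_zonal[OF _ x y, of "poly q"]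
    by (simp add: borel_measurable_continuous_onI continuous_on_poly)
  then show ?thesis
    using False by (simp add: inner_commute)
qed simp

lemma sum_ereal_less:
  fixes a :: "'i \<Rightarrow> ereal" and b :: "'i \<Rightarrow> real"
  assumes S: "finite S" and i: "i \<in> S" and le: "\<forall>j\<in>S. a j \<le> ereal (b j)" and less: "a i < ereal (b i)"
  shows "sum a S < ereal (sum b S)"
proof -
  have rest: "sum a (S - {i}) \<le> ereal (sum b (S - {i}))"
    using le sum_mono[of "S - {i}" a "\<lambda>j. ereal (b j)"] by simp
  have "sum a S = a i + sum a (S - {i})"
    using S i by (simp add: sum.remove)
  also have "\<dots> \<le> a i + ereal (sum b (S - {i}))"
    using rest by (rule add_left_mono)
  also have "\<dots> < ereal (b i) + ereal (sum b (S - {i}))"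
    using ereal_less_add[of "ereal (sum b (S - {i}))" "a i" "ereal (b i)"] less by (simp add: add.commute)
  also have "\<dots> = ereal (sum b S)"
    using S i by (simp add: sum.remove)
  finally show ?thesis .
qed

lemma spherical_design_inner_range:
  assumes "spherical_design L N X" "x \<in> sphere 0 1" "i < N"
  shows "x \<bullet> X i \<in> {-1..1}"
proof -
  have "norm (X i) = 1"
    using assms(1,3) by (simp add: spherical_design_def)
  then show ?thesis
    using assms(2) Cauchy_Schwarz_ineq2[of x "X i"] by (simp add: abs_le_iff)
qed

lemma pg_le_sum:
  fixes h :: "real \<Rightarrow> real"
  assumes "\<forall>i<N. g (x \<bullet> X i) \<le> ereal (h (x \<bullet> X i))"
  shows "pg g N X x \<le> ereal (\<Sum>i<N. h (x \<bullet> X i))"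
proof -
  have "pg g N X x \<le> (\<Sum>i<N. ereal (h (x \<bullet> X i)))"
    unfolding pg_def using assms by (intro sum_mono) simp
  then show ?thesis
    by simp
qed

lemma pg_less_sum:
  fixes h :: "real \<Rightarrow> real"
  assumes "\<forall>i<N. g (x \<bullet> X i) \<le> ereal (h (x \<bullet> X i))"
    and "i < N" "g (x \<bullet> X i) < ereal (h (x \<bullet> X i))"
  shows "pg g N X x < ereal (\<Sum>i<N. h (x \<bullet> X i))"
  unfolding pg_def using assms by (intro sum_ereal_less) auto

lemma pg_eq_sum:
  fixes h :: "real \<Rightarrow> real"
  assumes "\<forall>i<N. g (x \<bullet> X i) = ereal (h (x \<bullet> X i))"
  shows "pg g N X x = ereal (\<Sum>i<N. h (x \<bullet> X i))"
proof -
  have "pg g N X x = (\<Sum>i<N. ereal (h (x \<bullet> X i)))"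
    unfolding pg_def using assms by (intro sum.cong) simp_all
  then show ?thesis
    by simp
qed

theorem lemma3p5:
  fixes d m L N :: nat
    and g :: "real \<Rightarrow> ereal"
    and t :: "nat \<Rightarrow> real"
    and q :: "real poly"
    and X :: "nat \<Rightarrow> real^'n"
    and y :: "real^'n"
  assumes dim: "CARD('n) = d + 1"
    and d1: "d \<ge> 1"
    and m1: "m \<ge> 1"
    and g_range: "\<forall>s\<in>{-1..1}. g s \<noteq> \<infinity>"
    and t_mono: "\<forall>i\<in>{1..m}. t i < t (Suc i)"
    and t_lo: "-1 \<le> t 1"
    and t_hi: "t (m + 1) \<le> 1"
    and q_interp: "\<forall>i\<in>{1..m+1}. ereal (poly q (t i)) = g (t i)"
    and q_ge: "\<forall>s\<in>{-1..1}. ereal (poly q s) \<ge> g s"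
    and design: "spherical_design L N X"
    and degL: "degree q \<le> L"
    and y_sph: "y \<in> sphere 0 1"
    and y_D: "Dset y N X \<subseteq> t ` {1..m+1}"
  shows "(\<forall>x\<in>sphere 0 1. pg g N X x \<le> pg g N X y) \<and>
         ((\<forall>s\<in>{-1..1} - t ` {1..m+1}. ereal (poly q s) > g s) \<longrightarrow>
            (\<forall>z\<in>sphere 0 1. \<not> Dset z N X \<subseteq> t ` {1..m+1} \<longrightarrow>
               \<not> (\<forall>x\<in>sphere 0 1. pg g N X x \<le> pg g N X z)))"
proof -
  define Q where "Q x = (\<Sum>i<N. poly q (x \<bullet> X i))" for x :: "real^'n"
  have Q_eq_Q_y: "Q x = Q y" if "x \<in> sphere 0 1" for x
    unfolding Q_def using that y_sph by (intro spherical_design_sum_poly_inner_eq[OF design degL]) simp_all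
  have pg_le_Q: "pg g N X x \<le> Q x" if "x \<in> sphere 0 1" for x
    unfolding Q_def using q_ge spherical_design_inner_range[OF design that] by (intro pg_le_sum) simp
  have "\<forall>i<N. y \<bullet> X i \<in> t ` {1..m+1}"
    using y_D by (simp add: Dset_def image_subset_iff)
  then have pg_y: "pg g N X y = Q y"
    unfolding Q_def using q_interp by (intro pg_eq_sum) force
  have "pg g N X x \<le> pg g N X y" if "x \<in> sphere 0 1" for x
    using pg_le_Q[OF that] Q_eq_Q_y[OF that] pg_y by simp
  moreover have "pg g N X z < pg g N X y"
    if strict: "\<forall>s\<in>{-1..1} - t ` {1..m+1}. ereal (poly q s) > g s"
      and z: "z \<in> sphere 0 1" and z_D: "\<not> Dset z N X \<subseteq> t ` {1..m+1}" for z
  proof -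
    obtain i where "i < N" "z \<bullet> X i \<notin> t ` {1..m+1}"
      using z_D by (auto simp: Dset_def image_subset_iff)
    then have "pg g N X z < Q z"
      unfolding Q_def using strict q_ge spherical_design_inner_range[OF design z]
      by (intro pg_less_sum) auto
    then show ?thesis
      using Q_eq_Q_y[OF z] pg_y by simp
  qed
  ultimately show ?thesis
    using y_sph by (meson not_le)
qed

end
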